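(* Let $A\in\mathbb{R}^{n\times n}$ be a positive weighted circuit matrix with $k\ge 2$ weights $c_1,\dots,c_k>0$. Let $A'$ be obtained from $A$ by setting one or more, but not all, of the weights $c_j$ to $0$. Then $r(t):=r\big((1-t)A'+tA'^{\top}\big)$ is strictly concave in $t$ on $(0,1)$.
   Context: A weighted circuit matrix is an $n\times n$ matrix for which there exist $k\in\{1,\dots,n\}$ distinct indices $i_1,\dots,i_k\in\{1,\dots,n\}$ such that all entries are zero except weights $c_1,\dots,c_k$ at positions $(i_1,i_2),(i_2,i_3),\dots,(i_{k-1},i_k),(i_k,i_1)$. It is a positive weighted circuit matrix if all weights are positive. $r(M)$ denotes the spectral radius of $M$. *)

theory Defs
  imports "Jordan_Normal_Form.Spectral_Radius"
begin

definition real_spectral_radius :: "real mat \<Rightarrow> real" where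
  "real_spectral_radius A = spectral_radius (map_mat complex_of_real A)"

text \<open>The n x n weighted circuit matrix with (distinct) index list
  is = [i_1,...,i_k] (0-based indices below n) and weights c 0, ..., c (k-1):
  entry c m at position (is!m, is!((m+1) mod k)), zero elsewhere.\<close>
definition circuit_mat :: "nat \<Rightarrow> nat list \<Rightarrow> (nat \<Rightarrow> real) \<Rightarrow> real mat" where
  "circuit_mat n is c = mat n n (\<lambda>(i,j).
     \<Sum>m<length is. if i = is ! m \<and> j = is ! (Suc m mod length is) then c m else 0)"

definition strictly_concave_on :: "real set \<Rightarrow> (real \<Rightarrow> real) \<Rightarrow> bool" where
  "strictly_concave_on S f \<longleftrightarrow>
     (\<forall>x\<in>S. \<forall>y\<in>S. x \<noteq> y \<longrightarrow> (\<forall>u. 0 < u \<and> u < 1 \<longrightarrow>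
        f ((1 - u) * x + u * y) > (1 - u) * f x + u * f y))"

end

theory Submission
  imports Defs
begin

text \<open>Setting some weights of the circuit to zero breaks it into directed paths, so the indices
  carry a grading h with h j = h i + 1 whenever A'(i,j) \<noteq> 0. Conjugating by the diagonal
  matrix with entries \<rho>^(h i), \<rho> = sqrt ((1 - t) / t), turns (1 - t) A' + t A'^T into
  sqrt (t (1 - t)) (A' + A'^T), so r(t) = sqrt (t (1 - t)) r(A' + A'^T), a positive multiple of a
  strictly concave function. Positivity of r(A' + A'^T) comes from the trace of its square, which
  is a positive sum of squares since the matrix is symmetric and nonzero, whereas a matrix of
  spectral radius 0 is similar to a strictly upper triangular one (Schur) and so has
  tr(B^2) = 0.\<close>

definition mat_trace :: "'a::comm_ring mat \<Rightarrow> 'a" where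
  "mat_trace A = (\<Sum>i<dim_row A. A $$ (i, i))"

lemma mat_trace_mult_comm:
  assumes "A \<in> carrier_mat n m" and "B \<in> carrier_mat m n"
  shows "mat_trace (A * B) = mat_trace (B * A)"
proof -
  have "mat_trace (A * B) = (\<Sum>i<n. \<Sum>j<m. A $$ (i, j) * B $$ (j, i))"
    using assms by (auto simp: mat_trace_def scalar_prod_def atLeast0LessThan intro!: sum.cong)
  also have "\<dots> = (\<Sum>j<m. \<Sum>i<n. B $$ (j, i) * A $$ (i, j))"
    by (subst sum.swap) (simp add: mult.commute)
  also have "\<dots> = mat_trace (B * A)"
    using assms by (auto simp: mat_trace_def scalar_prod_def atLeast0LessThan intro!: sum.cong)
  finally show ?thesis .
qed

lemma mat_trace_similar:
  assumes "similar_mat A B"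
  shows "mat_trace A = mat_trace B"
proof -
  from similar_matD[OF assms] obtain n P Q where
    carrier: "B \<in> carrier_mat n n" "P \<in> carrier_mat n n" "Q \<in> carrier_mat n n"
    and QP: "Q * P = 1\<^sub>m n" and A: "A = P * B * Q"
    by auto
  have "mat_trace A = mat_trace (Q * (P * B))"
    unfolding A using carrier by (intro mat_trace_mult_comm) auto
  also have "\<dots> = mat_trace B"
    using carrier QP by (simp add: assoc_mult_mat[symmetric, of Q n n P n B n])
  finally show ?thesis .
qed

lemma mat_trace_square_upper_triangular:
  fixes U :: "'a::comm_ring_1 mat"
  assumes U: "U \<in> carrier_mat n n" and triangular: "upper_triangular U"
  shows "mat_trace (U * U) = (\<Sum>i<n. (U $$ (i, i))\<^sup>2)"
proof -
  have "(U * U) $$ (i, i) = (U $$ (i, i))\<^sup>2" if i: "i < n" for i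
  proof -
    have "(U * U) $$ (i, i) = (\<Sum>j<n. U $$ (i, j) * U $$ (j, i))"
      using U i by (auto simp: scalar_prod_def atLeast0LessThan intro!: sum.cong)
    also have "\<dots> = (\<Sum>j<n. if j = i then (U $$ (i, i))\<^sup>2 else 0)"
      using triangular U i
      by (intro sum.cong) (auto simp: upper_triangular_def power2_eq_square neq_iff)
    finally show ?thesis using i by simp
  qed
  then show ?thesis using U by (simp add: mat_trace_def)
qed

lemma mat_trace_square_symmetric:
  fixes B :: "'a::comm_ring_1 mat"
  assumes B: "B \<in> carrier_mat n n" and symmetric: "transpose_mat B = B"
  shows "mat_trace (B * B) = (\<Sum>i<n. \<Sum>j<n. (B $$ (i, j))\<^sup>2)"
proof -
  have "B $$ (j, i) = B $$ (i, j)" if "i < n" "j < n" for i j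
    using that B arg_cong[OF symmetric, of "\<lambda>M. M $$ (i, j)"] by simp
  then show ?thesis
    using B by (auto simp: mat_trace_def scalar_prod_def atLeast0LessThan power2_eq_square
        intro!: sum.cong)
qed

lemma upper_triangular_diag_root_char_poly:
  fixes U :: "'a::field mat"
  assumes "U \<in> carrier_mat n n" and "upper_triangular U" and "i < n"
  shows "poly (char_poly U) (U $$ (i, i)) = 0"
  using assms by (auto simp: char_poly_upper_triangular diag_mat_def poly_prod_list_zero_iff)

lemma spectral_radius_pos_of_mat_trace_square:
  fixes B :: "complex mat"
  assumes B: "B \<in> carrier_mat n n" and trace: "mat_trace (B * B) \<noteq> 0"
  shows "spectral_radius B > 0"
proof -
  have n: "n > 0"
    using B trace by (cases "n = 0") (auto simp: mat_trace_def)
  obtain es where "char_poly B = (\<Prod>a\<leftarrow>es. [:- a, 1:])"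
    using char_poly_factorized[OF B] by auto
  then obtain U where U: "U \<in> carrier_mat n n" "upper_triangular U" and similar: "similar_mat B U"
    using schur_decomposition_exists[OF B] by auto
  have "spectral_radius B \<noteq> 0"
  proof
    assume radius: "spectral_radius B = 0"
    have "U $$ (i, i) = 0" if i: "i < n" for i
    proof -
      have "U $$ (i, i) \<in> spectrum B"
        using upper_triangular_diag_root_char_poly[OF U i] char_poly_similar[OF similar]
        by (simp add: spectrum_root_char_poly[OF B])
      then have "norm (U $$ (i, i)) \<le> spectral_radius B"
        by (intro spectral_radius_mem_max(2)[OF B n]) simp
      then show ?thesis using radius by simp
    qed
    then have "mat_trace (U * U) = 0"
      by (simp add: mat_trace_square_upper_triangular[OF U])
    moreover have "similar_mat (B * B) (U * U)"
    proof -
      from similar obtain P Q where "similar_mat_wit B U P Q"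
        unfolding similar_mat_def by blast
      from similar_mat_wit_pow[OF this, of 2] show ?thesis
        using B U unfolding similar_mat_def by (auto simp: numeral_2_eq_2)
    qed
    ultimately show False
      using trace mat_trace_similar by metis
  qed
  moreover have "spectral_radius B \<ge> 0"
    using spectral_radius_mem_max(1)[OF B n] by auto
  ultimately show ?thesis by simp
qed

lemma real_spectral_radius_pos_symmetric:
  fixes B :: "real mat"
  assumes B: "B \<in> carrier_mat n n" and symmetric: "transpose_mat B = B" and nonzero: "B \<noteq> 0\<^sub>m n n"
  shows "real_spectral_radius B > 0"
proof -
  obtain i j where ij: "i < n" "j < n" and entry: "B $$ (i, j) \<noteq> 0"
    using nonzero B by (metis carrier_matD eq_matI index_zero_mat(1-3))
  have "0 < (\<Sum>j<n. (B $$ (i, j))\<^sup>2)"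
    using ij entry by (intro sum_pos2[where i = j]) auto
  then have "0 < (\<Sum>i<n. \<Sum>j<n. (B $$ (i, j))\<^sup>2)"
    using ij by (intro sum_pos2[where i = i and f = "\<lambda>i. \<Sum>j<n. (B $$ (i, j))\<^sup>2"])
      (auto intro: sum_nonneg)
  then have "mat_trace (B * B) \<noteq> 0"
    by (simp add: mat_trace_square_symmetric[OF B symmetric])
  moreover have "mat_trace (map_mat complex_of_real B * map_mat complex_of_real B)
      = complex_of_real (mat_trace (B * B))"
    using B by (simp add: of_real_hom.mat_hom_mult[symmetric] mat_trace_def)
  ultimately show ?thesis
    unfolding real_spectral_radius_def using B
    by (intro spectral_radius_pos_of_mat_trace_square) auto
qed

lemma eigenvalue_diagonal_scaling:
  fixes A B :: "'a::field mat"
  assumes A: "A \<in> carrier_mat n n" and B: "B \<in> carrier_mat n n"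
    and d: "\<And>i. i < n \<Longrightarrow> d i \<noteq> 0" and s: "s \<noteq> 0"
    and scale: "\<And>i j. i < n \<Longrightarrow> j < n \<Longrightarrow> d i * A $$ (i, j) = s * B $$ (i, j) * d j"
    and eigenvalue: "eigenvalue A \<mu>"
  shows "eigenvalue B (\<mu> / s)"
proof -
  from eigenvalue obtain v where v: "v \<in> carrier_vec n" "v \<noteq> 0\<^sub>v n" "A *\<^sub>v v = \<mu> \<cdot>\<^sub>v v"
    unfolding eigenvalue_def eigenvector_def using A by auto
  define w where "w = vec n (\<lambda>i. d i * v $ i)"
  have w: "w \<in> carrier_vec n"
    unfolding w_def by simp
  have "w \<noteq> 0\<^sub>v n"
  proof
    assume "w = 0\<^sub>v n"
    have "v $ i = 0" if i: "i < n" for i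
    proof -
      have "d i * v $ i = 0"
        using \<open>w = 0\<^sub>v n\<close> i unfolding w_def by (metis index_vec index_zero_vec(1))
      then show ?thesis using d[OF i] by simp
    qed
    then have "v = 0\<^sub>v n"
      using v(1) by (intro eq_vecI) auto
    then show False using v(2) by contradiction
  qed
  moreover have "B *\<^sub>v w = (\<mu> / s) \<cdot>\<^sub>v w"
  proof (rule eq_vecI)
    fix i assume "i < dim_vec ((\<mu> / s) \<cdot>\<^sub>v w)"
    then have i: "i < n" using w by simp
    have "s * (B *\<^sub>v w) $ i = (\<Sum>j<n. s * B $$ (i, j) * d j * v $ j)"
      using B i by (auto simp: w_def scalar_prod_def atLeast0LessThan sum_distrib_left ac_simps
          intro!: sum.cong)
    also have "\<dots> = d i * (A *\<^sub>v v) $ i"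
      using A i v(1) scale[OF i]
      by (auto simp: scalar_prod_def atLeast0LessThan sum_distrib_left ac_simps intro!: sum.cong)
    also have "\<dots> = s * ((\<mu> / s) \<cdot>\<^sub>v w) $ i"
      using v i s by (simp add: w_def)
    finally show "(B *\<^sub>v w) $ i = ((\<mu> / s) \<cdot>\<^sub>v w) $ i"
      using s by simp
  qed (use B w in auto)
  ultimately show ?thesis
    unfolding eigenvalue_def eigenvector_def using B w by auto
qed

lemma spectrum_diagonal_scaling:
  fixes A B :: "'a::field mat"
  assumes A: "A \<in> carrier_mat n n" and B: "B \<in> carrier_mat n n"
    and d: "\<And>i. i < n \<Longrightarrow> d i \<noteq> 0" and s: "s \<noteq> 0"
    and scale: "\<And>i j. i < n \<Longrightarrow> j < n \<Longrightarrow> d i * A $$ (i, j) = s * B $$ (i, j) * d j"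
  shows "spectrum A = (\<lambda>x. s * x) ` spectrum B"
proof (intro equalityI subsetI)
  fix \<mu> assume "\<mu> \<in> spectrum A"
  then have "\<mu> / s \<in> spectrum B"
    using eigenvalue_diagonal_scaling[OF A B d s scale] by (simp add: spectrum_def)
  then show "\<mu> \<in> (\<lambda>x. s * x) ` spectrum B"
    using s by (intro image_eqI[of _ _ "\<mu> / s"]) auto
next
  have scale_inverse: "(1 / d i) * B $$ (i, j) = (1 / s) * A $$ (i, j) * (1 / d j)"
    if "i < n" "j < n" for i j
    using scale[OF that] d[OF that(1)] d[OF that(2)] s by (simp add: field_simps)
  fix \<mu> assume "\<mu> \<in> (\<lambda>x. s * x) ` spectrum B"
  then obtain \<nu> where "\<nu> \<in> spectrum B" and \<mu>: "\<mu> = s * \<nu>" by auto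
  then have "eigenvalue A (\<nu> / (1 / s))"
    using eigenvalue_diagonal_scaling[OF B A, of "\<lambda>i. 1 / d i" "1 / s"] d s scale_inverse
    by (simp add: spectrum_def)
  then show "\<mu> \<in> spectrum A"
    using \<mu> by (simp add: spectrum_def mult.commute)
qed

lemma spectral_radius_diagonal_scaling:
  fixes A B :: "complex mat" and s :: real
  assumes A: "A \<in> carrier_mat n n" and B: "B \<in> carrier_mat n n" and n: "0 < n"
    and d: "\<And>i. i < n \<Longrightarrow> d i \<noteq> 0" and s: "0 < s"
    and scale: "\<And>i j. i < n \<Longrightarrow> j < n \<Longrightarrow> d i * A $$ (i, j) = of_real s * B $$ (i, j) * d j"
  shows "spectral_radius A = s * spectral_radius B"
proof -
  have "norm ` spectrum A = (\<lambda>r. s * r) ` norm ` spectrum B"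
    using spectrum_diagonal_scaling[OF A B d _ scale] s by (auto simp: image_image norm_mult)
  moreover have "finite (norm ` spectrum B)" "norm ` spectrum B \<noteq> {}"
    using card_finite_spectrum[OF B] spectrum_non_empty[OF B n] by auto
  ultimately show ?thesis
    unfolding spectral_radius_def using s
    by (simp add: mono_Max_commute[symmetric] mono_def mult_left_mono)
qed

lemma real_spectral_radius_diagonal_scaling:
  fixes A B :: "real mat"
  assumes A: "A \<in> carrier_mat n n" and B: "B \<in> carrier_mat n n" and n: "0 < n"
    and d: "\<And>i. i < n \<Longrightarrow> d i \<noteq> 0" and s: "0 < s"
    and scale: "\<And>i j. i < n \<Longrightarrow> j < n \<Longrightarrow> d i * A $$ (i, j) = s * B $$ (i, j) * d j"
  shows "real_spectral_radius A = s * real_spectral_radius B"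
  unfolding real_spectral_radius_def
proof (rule spectral_radius_diagonal_scaling[where d = "\<lambda>i. of_real (d i)"])
  fix i j assume "i < n" "j < n"
  then show "of_real (d i) * map_mat complex_of_real A $$ (i, j)
      = of_real s * map_mat complex_of_real B $$ (i, j) * of_real (d j)"
    using A B scale[of i j] by (simp flip: of_real_mult)
qed (use A B n d s in auto)

lemma sqrt_balance:
  fixes t :: real
  assumes t: "0 < t" "t < 1"
  shows "sqrt (t * (1 - t)) * sqrt ((1 - t) / t) = 1 - t"
    and "t * sqrt ((1 - t) / t) = sqrt (t * (1 - t))"
proof -
  have "sqrt (t * (1 - t)) * sqrt ((1 - t) / t) = sqrt ((1 - t)\<^sup>2)"
    using t by (simp add: power2_eq_square flip: real_sqrt_mult)
  then show "sqrt (t * (1 - t)) * sqrt ((1 - t) / t) = 1 - t"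
    using t by simp
  have "t * sqrt ((1 - t) / t) = sqrt t * (sqrt t * sqrt ((1 - t) / t))"
    using t by (simp add: mult.assoc[symmetric])
  also have "\<dots> = sqrt t * sqrt (1 - t)"
    using t by (simp flip: real_sqrt_mult)
  finally show "t * sqrt ((1 - t) / t) = sqrt (t * (1 - t))"
    by (simp add: real_sqrt_mult)
qed

lemma real_spectral_radius_interpolate_transpose:
  fixes A :: "real mat" and h :: "nat \<Rightarrow> nat"
  assumes A: "A \<in> carrier_mat n n" and n: "0 < n"
    and graded: "\<And>i j. i < n \<Longrightarrow> j < n \<Longrightarrow> A $$ (i, j) \<noteq> 0 \<Longrightarrow> h j = Suc (h i)"
    and t: "0 < t" "t < 1"
  shows "real_spectral_radius ((1 - t) \<cdot>\<^sub>m A + t \<cdot>\<^sub>m transpose_mat A)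
    = sqrt (t * (1 - t)) * real_spectral_radius (A + transpose_mat A)"
proof (rule real_spectral_radius_diagonal_scaling[where d = "\<lambda>i. sqrt ((1 - t) / t) ^ h i"])
  define \<rho> where "\<rho> = sqrt ((1 - t) / t)"
  note forward = sqrt_balance(1)[OF t, folded \<rho>_def]
    and backward = sqrt_balance(2)[OF t, folded \<rho>_def]
  fix i j assume ij: "i < n" "j < n"
  have upper: "\<rho> ^ h i * ((1 - t) * A $$ (i, j)) = sqrt (t * (1 - t)) * A $$ (i, j) * \<rho> ^ h j"
  proof (cases "A $$ (i, j) = 0")
    case False
    then have "\<rho> ^ h j = \<rho> * \<rho> ^ h i" using graded[OF ij] by simp
    moreover have "\<rho> ^ h i * ((1 - t) * A $$ (i, j)) = (sqrt (t * (1 - t)) * \<rho>) * \<rho> ^ h i * A $$ (i, j)"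
      by (simp only: forward) (simp add: mult_ac)
    ultimately show ?thesis by (simp add: mult_ac)
  qed simp
  have lower: "\<rho> ^ h i * (t * A $$ (j, i)) = sqrt (t * (1 - t)) * A $$ (j, i) * \<rho> ^ h j"
  proof (cases "A $$ (j, i) = 0")
    case False
    then have "\<rho> ^ h i = \<rho> * \<rho> ^ h j" using graded[OF ij(2,1)] by simp
    then have "\<rho> ^ h i * (t * A $$ (j, i)) = (t * \<rho>) * A $$ (j, i) * \<rho> ^ h j"
      by (simp add: mult_ac)
    then show ?thesis by (simp only: backward)
  qed simp
  have "((1 - t) \<cdot>\<^sub>m A + t \<cdot>\<^sub>m transpose_mat A) $$ (i, j) = (1 - t) * A $$ (i, j) + t * A $$ (j, i)"
    "(A + transpose_mat A) $$ (i, j) = A $$ (i, j) + A $$ (j, i)"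
    using A ij by auto
  then show "\<rho> ^ h i * ((1 - t) \<cdot>\<^sub>m A + t \<cdot>\<^sub>m transpose_mat A) $$ (i, j)
      = sqrt (t * (1 - t)) * (A + transpose_mat A) $$ (i, j) * \<rho> ^ h j"
    by (simp add: distrib_left distrib_right upper lower)
qed (use A n t in auto)

lemma circuit_mat_dim [simp]:
  "dim_row (circuit_mat n is c) = n" "dim_col (circuit_mat n is c) = n"
  by (simp_all add: circuit_mat_def)

lemma circuit_mat_carrier [simp]: "circuit_mat n is c \<in> carrier_mat n n"
  by (rule carrier_matI) simp_all

lemma circuit_mat_nonneg:
  assumes "\<forall>m<length is. c m \<ge> 0" and "i < n" and "j < n"
  shows "circuit_mat n is c $$ (i, j) \<ge> 0"
  using assms by (auto simp: circuit_mat_def intro!: sum_nonneg)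

lemma circuit_mat_row:
  assumes "distinct is" and "set is \<subseteq> {..<n}" and m: "m < length is" and "j < n"
  shows "circuit_mat n is c $$ (is ! m, j) = (if j = is ! (Suc m mod length is) then c m else 0)"
proof -
  have "is ! m < n"
    using assms nth_mem by blast
  then have "circuit_mat n is c $$ (is ! m, j)
      = (\<Sum>m'<length is. if is ! m = is ! m' \<and> j = is ! (Suc m' mod length is) then c m' else 0)"
    using assms by (simp add: circuit_mat_def)
  also have "\<dots> = (\<Sum>m'<length is. if m' = m then (if j = is ! (Suc m mod length is) then c m else 0) else 0)"
    using assms by (intro sum.cong) (auto simp: nth_eq_iff_index_eq)
  finally show ?thesis using m by simp
qed

lemma circuit_mat_nonzero_entry:
  assumes "distinct is" and "set is \<subseteq> {..<n}" and "i < n" and "j < n"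
    and nonzero: "circuit_mat n is c $$ (i, j) \<noteq> 0"
  obtains m where "m < length is" "i = is ! m" "j = is ! (Suc m mod length is)" "c m \<noteq> 0"
proof -
  have "\<exists>m<length is. i = is ! m \<and> j = is ! (Suc m mod length is)"
  proof (rule ccontr)
    assume "\<not> ?thesis"
    then have "circuit_mat n is c $$ (i, j) = 0"
      using assms by (auto simp: circuit_mat_def intro!: sum.neutral)
    then show False using nonzero by contradiction
  qed
  then show ?thesis
    using that nonzero circuit_mat_row[OF assms(1,2) _ assms(4)] by force
qed

lemma cyclic_offset_Suc:
  fixes k m0 p :: nat
  assumes "p < k" "m0 < k" "p \<noteq> m0"
  shows "(Suc p mod k + k - Suc m0) mod k = Suc ((p + k - Suc m0) mod k)"
proof -
  consider "Suc p = k" | "m0 < p" "Suc p < k" | "p < m0" using assms by linarith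
  then show ?thesis
  proof cases
    case 1
    then have "Suc p mod k + k - Suc m0 = p - m0" "p + k - Suc m0 = (p - Suc m0) + k"
      using assms by auto
    moreover have "p - m0 < k" "p - Suc m0 < k"
      using assms by auto
    ultimately show ?thesis
      using 1 assms by (simp only: mod_add_self2 mod_less)
  next
    case 2
    then have "Suc p mod k + k - Suc m0 = (p - m0) + k" "p + k - Suc m0 = (p - Suc m0) + k"
      by auto
    moreover have "p - m0 < k" "p - Suc m0 < k"
      using assms by auto
    ultimately show ?thesis
      using 2 by (simp only: mod_add_self2 mod_less)
  next
    case 3
    then show ?thesis using assms by simp
  qed
qed

lemma circuit_mat_zero_weight_graded:
  assumes distinct: "distinct is" and "set is \<subseteq> {..<n}"
    and m0: "m0 < length is" and zero: "c m0 = 0"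
  obtains h where "\<And>i j. i < n \<Longrightarrow> j < n \<Longrightarrow> circuit_mat n is c $$ (i, j) \<noteq> 0 \<Longrightarrow> h j = Suc (h i)"
proof
  define k where "k = length is"
  \<comment> \<open>the number of steps along the circuit from the vertex following the removed edge m0\<close>
  define h where "h i = ((THE p. p < k \<and> is ! p = i) + k - Suc m0) mod k" for i
  have h_nth: "h (is ! p) = (p + k - Suc m0) mod k" if "p < k" for p
  proof -
    have "(THE p'. p' < k \<and> is ! p' = is ! p) = p"
      using that distinct by (intro the_equality) (auto simp: k_def nth_eq_iff_index_eq)
    then show ?thesis by (simp add: h_def)
  qed
  fix i j assume "i < n" "j < n" "circuit_mat n is c $$ (i, j) \<noteq> 0"
  then obtain p where p: "p < k" "i = is ! p" "j = is ! (Suc p mod k)" and "c p \<noteq> 0"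
    using circuit_mat_nonzero_entry assms unfolding k_def by metis
  then have "p \<noteq> m0" using zero by auto
  moreover have "Suc p mod k < k" using p(1) by simp
  ultimately show "h j = Suc (h i)"
    using p m0 h_nth cyclic_offset_Suc unfolding k_def by simp
qed

lemma circuit_mat_add_transpose_nonzero:
  assumes "distinct is" and "set is \<subseteq> {..<n}" and nonneg: "\<forall>m<length is. c m \<ge> 0"
    and m: "m < length is" and pos: "c m > 0"
  shows "circuit_mat n is c + transpose_mat (circuit_mat n is c) \<noteq> 0\<^sub>m n n"
proof -
  define i j where "i = is ! m" and "j = is ! (Suc m mod length is)"
  have "0 < length is"
    using m by linarith
  then have "Suc m mod length is < length is"
    by simp
  then have ij: "i < n" "j < n"
    using assms(2) m nth_mem unfolding i_def j_def by blast+
  have "0 < circuit_mat n is c $$ (i, j)"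
    using circuit_mat_row[OF assms(1,2) m ij(2)] pos unfolding i_def j_def by simp
  moreover have "0 \<le> circuit_mat n is c $$ (j, i)"
    using circuit_mat_nonneg[OF nonneg ij(2,1)] .
  ultimately have "(circuit_mat n is c + transpose_mat (circuit_mat n is c)) $$ (i, j) \<noteq> 0"
    using ij by simp
  then show ?thesis
    using ij by (metis index_zero_mat(1))
qed

lemma sqrt_mult_one_minus_strict_concave:
  fixes x y u :: real
  assumes "0 < x" "x < 1" "0 < y" "y < 1" "x \<noteq> y" "0 < u" "u < 1"
  shows "(1 - u) * sqrt (x * (1 - x)) + u * sqrt (y * (1 - y))
           < sqrt (((1 - u) * x + u * y) * (1 - ((1 - u) * x + u * y)))"
proof -
  define a b where "a = sqrt (x * (1 - x))" and "b = sqrt (y * (1 - y))"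
  have a: "a \<ge> 0" "a\<^sup>2 = x * (1 - x)" and b: "b \<ge> 0" "b\<^sup>2 = y * (1 - y)"
    using assms unfolding a_def b_def by auto
  have "(2 * a * b)\<^sup>2 < (x * (1 - y) + y * (1 - x))\<^sup>2"
  proof -
    have "(x * (1 - y) + y * (1 - x))\<^sup>2 - (2 * a * b)\<^sup>2 = (x - y)\<^sup>2"
      unfolding power_mult_distrib a(2) b(2) by (simp add: power2_eq_square algebra_simps)
    moreover have "0 < (x - y)\<^sup>2" using assms by simp
    ultimately show ?thesis by linarith
  qed
  moreover have "0 \<le> x * (1 - y) + y * (1 - x)"
    using assms by (intro add_nonneg_nonneg mult_nonneg_nonneg) auto
  ultimately have ab: "2 * a * b < x * (1 - y) + y * (1 - x)"
    by (rule power2_less_imp_less)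
  have "((1 - u) * a + u * b)\<^sup>2 = (1 - u)\<^sup>2 * a\<^sup>2 + u\<^sup>2 * b\<^sup>2 + u * (1 - u) * (2 * a * b)"
    by (simp add: power2_eq_square algebra_simps)
  also have "\<dots> < (1 - u)\<^sup>2 * a\<^sup>2 + u\<^sup>2 * b\<^sup>2 + u * (1 - u) * (x * (1 - y) + y * (1 - x))"
    using ab assms by (intro add_strict_left_mono mult_strict_left_mono) auto
  also have "\<dots> = ((1 - u) * x + u * y) * (1 - ((1 - u) * x + u * y))"
    unfolding a(2) b(2) by (simp add: power2_eq_square algebra_simps)
  finally show ?thesis unfolding a_def b_def by (rule real_less_rsqrt)
qed

lemma strictly_concave_on_scaled_sqrt:
  fixes f :: "real \<Rightarrow> real"
  assumes r: "0 < r" and f: "\<And>t. t \<in> {0<..<1} \<Longrightarrow> f t = sqrt (t * (1 - t)) * r"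
  shows "strictly_concave_on {0<..<1} f"
  unfolding strictly_concave_on_def
proof (intro ballI allI impI)
  fix x y u :: real
  assume x: "x \<in> {0<..<1}" and y: "y \<in> {0<..<1}" and "x \<noteq> y" and u: "0 < u \<and> u < 1"
  have "0 < (1 - u) * x + u * y"
    using x y u by (intro add_pos_pos mult_pos_pos) auto
  moreover have "(1 - u) * x + u * y < (1 - u) * 1 + u * 1"
    using x y u by (intro add_strict_mono mult_strict_left_mono) auto
  moreover have "((1 - u) * sqrt (x * (1 - x)) + u * sqrt (y * (1 - y))) * r
      < sqrt (((1 - u) * x + u * y) * (1 - ((1 - u) * x + u * y))) * r"
    using sqrt_mult_one_minus_strict_concave[of x y u] x y \<open>x \<noteq> y\<close> u r
    by (intro mult_strict_right_mono) auto
  ultimately show "(1 - u) * f x + u * f y < f ((1 - u) * x + u * y)"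
    using f x y by (simp add: algebra_simps)
qed

theorem corollary2:
  fixes n :: nat and "is" :: "nat list" and c :: "nat \<Rightarrow> real"
    and S :: "nat set" and A A' :: "real mat"
  assumes "distinct is" and "set is \<subseteq> {..<n}" and "length is \<ge> 2"
    and "\<forall>m<length is. c m > 0"
    and "A = circuit_mat n is c"
    and "S \<subseteq> {..<length is}" and "S \<noteq> {}" and "S \<noteq> {..<length is}"
    and "A' = circuit_mat n is (\<lambda>m. if m \<in> S then 0 else c m)"
  shows "strictly_concave_on {0<..<1}
           (\<lambda>t. real_spectral_radius ((1 - t) \<cdot>\<^sub>m A' + t \<cdot>\<^sub>m transpose_mat A'))"
proof -
  define c' where "c' = (\<lambda>m. if m \<in> S then 0 else c m)"
  have A': "A' = circuit_mat n is c'"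
    using assms(9) by (simp add: c'_def)
  obtain m0 where "m0 \<in> S" using assms(7) by auto
  then obtain h where graded:
    "\<And>i j. i < n \<Longrightarrow> j < n \<Longrightarrow> A' $$ (i, j) \<noteq> 0 \<Longrightarrow> h j = Suc (h i)"
    using circuit_mat_zero_weight_graded[of "is" n m0 c'] assms(1,2,6) unfolding A' c'_def by auto
  obtain m1 where m1: "m1 < length is" "m1 \<notin> S" using assms(6,8) by auto
  then have "is ! m1 < n"
    using assms(2) nth_mem by blast
  then have n: "0 < n"
    by simp
  have "\<forall>m<length is. c' m \<ge> 0" and "c' m1 > 0"
    using assms(4) m1 by (simp_all add: c'_def less_imp_le)
  then have "A' + transpose_mat A' \<noteq> 0\<^sub>m n n"
    unfolding A' using circuit_mat_add_transpose_nonzero[OF assms(1,2)] m1(1) by blast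
  moreover have "transpose_mat (A' + transpose_mat A') = A' + transpose_mat A'"
    using comm_add_mat[of "transpose_mat A'" n n A'] by (simp add: A' transpose_add[of _ n n])
  ultimately have positive: "real_spectral_radius (A' + transpose_mat A') > 0"
    by (intro real_spectral_radius_pos_symmetric) (simp_all add: A')
  have "real_spectral_radius ((1 - t) \<cdot>\<^sub>m A' + t \<cdot>\<^sub>m transpose_mat A')
      = sqrt (t * (1 - t)) * real_spectral_radius (A' + transpose_mat A')" if "t \<in> {0<..<1}" for t
    using real_spectral_radius_interpolate_transpose[OF _ n graded] that by (simp add: A')
  then show ?thesis
    by (rule strictly_concave_on_scaled_sqrt[OF positive])
qed

end
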